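(* Let $\mathcal{H}$ be an infinite-dimensional separable real or complex Hilbert space and let $A$ be a positive bounded operator on $\mathcal{H}$ with $\|A\|_{ess}>1$. Then $A$ has a projection decomposition.
   Context: For a bounded operator $B$ on $\mathcal{H}$, the essential norm is $\|B\|_{ess}=\inf\{\|B-K\| : K \text{ compact operator on } \mathcal{H}\}$. A positive operator $A$ has a projection decomposition if $A$ can be written as the sum of a finite or infinite sequence of (not necessarily mutually orthogonal) self-adjoint (orthogonal) projections, with the series converging in the strong operator topology. $A$ is not assumed invertible. *)

theory Defs
  imports "HOL-Analysis.Analysis"
begin

text \<open>Hilbert spaces are modelled as types of class real_inner + complete_space
  (real Hilbert spaces). A complex Hilbert space is modelled as its underlying real
  Hilbert space (real part of the inner product) together with the multiplication
  by the imaginary unit, an operator J with J J = -1 that preserves the inner product.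
  A scalar structure J is either the identity (real case) or such a complex structure;
  "J-linear" operators (those commuting with J) are then exactly the operators that are
  linear over the scalar field.\<close>

definition complex_structure :: "('a::real_inner \<Rightarrow>\<^sub>L 'a) \<Rightarrow> bool" where
  "complex_structure J \<longleftrightarrow>
     (\<forall>x. J (J x) = - x) \<and> (\<forall>x y. inner (J x) (J y) = inner x y)"

definition scalar_structure :: "('a::real_inner \<Rightarrow>\<^sub>L 'a) \<Rightarrow> bool" where
  "scalar_structure J \<longleftrightarrow> J = id_blinfun \<or> complex_structure J"

definition J_linear :: "('a::real_normed_vector \<Rightarrow>\<^sub>L 'a) \<Rightarrow> ('a \<Rightarrow>\<^sub>L 'a) \<Rightarrow> bool" where
  "J_linear J T \<longleftrightarrow> (\<forall>x. T (J x) = J (T x))"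

definition infinite_dimensional :: "'a::real_vector itself \<Rightarrow> bool" where
  "infinite_dimensional _ \<longleftrightarrow> (\<forall>B::'a set. finite B \<longrightarrow> span B \<noteq> UNIV)"

definition self_adjoint :: "('a::real_inner \<Rightarrow>\<^sub>L 'a) \<Rightarrow> bool" where
  "self_adjoint T \<longleftrightarrow> (\<forall>x y. inner (T x) y = inner x (T y))"

definition positive_op :: "('a::real_inner \<Rightarrow>\<^sub>L 'a) \<Rightarrow> bool" where
  "positive_op T \<longleftrightarrow> self_adjoint T \<and> (\<forall>x. 0 \<le> inner (T x) x)"

definition projection_op :: "('a::real_inner \<Rightarrow>\<^sub>L 'a) \<Rightarrow> bool" where
  "projection_op P \<longleftrightarrow> self_adjoint P \<and> (\<forall>x. P (P x) = P x)"

definition compact_op :: "('a::real_normed_vector \<Rightarrow>\<^sub>L 'a) \<Rightarrow> bool" where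
  "compact_op K \<longleftrightarrow> compact (closure (blinfun_apply K ` cball 0 1))"

definition ess_norm :: "('a::real_normed_vector \<Rightarrow>\<^sub>L 'a) \<Rightarrow> ('a \<Rightarrow>\<^sub>L 'a) \<Rightarrow> real" where
  "ess_norm J B = Inf {norm (B - K) | K. compact_op K \<and> J_linear J K}"

text \<open>Projection decomposition: A is the sum of a finite or infinite sequence of
  projections (indexed by a set I of naturals, finite or infinite, in increasing order),
  the series converging in the strong operator topology.\<close>
definition has_projection_decomposition ::
  "('a::real_inner \<Rightarrow>\<^sub>L 'a) \<Rightarrow> ('a \<Rightarrow>\<^sub>L 'a) \<Rightarrow> bool" where
  "has_projection_decomposition J A \<longleftrightarrow>
     (\<exists>(I::nat set) (P::nat \<Rightarrow> ('a \<Rightarrow>\<^sub>L 'a)).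
        (\<forall>i\<in>I. projection_op (P i) \<and> J_linear J (P i)) \<and>
        (\<forall>x. (\<lambda>n. \<Sum>i\<in>I \<inter> {..<n}. P i x) \<longlonglongrightarrow> A x))"

end

theory Submission
  imports Defs
begin

text \<open>Let c = ess_norm J A > 1. If R is positive, J-linear and at distance at least c from the
  compact J-linear operators, then for every x with inner (R x) x > 0 there is a J-linear
  projection P of rank at most two with P \<le> R whose quadratic form at x is bounded below in
  terms of inner (R x) x, norm R and norm x. It projects onto span {u, J u} for u proportional to
  R v, where the test vector v = x + t y satisfies inner (R v) v \<le> norm (R v)^2; by the
  Cauchy-Schwarz inequality for the form of R this forces P \<le> R. The vector y, orthogonal to
  finitely many given vectors and with inner (R y) y > 1, exists because R is not close to a
  compact operator.
  Subtracting such a projection does not change the distance to the compact operators, so the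
  construction can be iterated greedily, aiming in turn at the points of a countable dense set,
  each infinitely often. The remainders decrease; their quadratic forms tend to 0 on the dense
  set, hence everywhere, hence the remainders tend to 0 strongly.\<close>

section \<open>Positive operators\<close>

lemma positive_op_inner_sq_le:
  assumes "positive_op T"
  shows "(inner (T x) y)^2 \<le> inner (T x) x * inner (T y) y"
proof -
  have sa: "\<And>a b. inner (T a) b = inner a (T b)" and ps: "\<And>a. 0 \<le> inner (T a) a"
    using assms by (auto simp: positive_op_def self_adjoint_def)
  have sym: "inner (T y) x = inner (T x) y"
    by (metis sa inner_commute)
  have quad: "0 \<le> inner (T x) x + 2 * t * inner (T x) y + t^2 * inner (T y) y" for t :: real
  proof -
    have "0 \<le> inner (T (x + t *\<^sub>R y)) (x + t *\<^sub>R y)" by (rule ps)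
    also have "\<dots> = inner (T x) x + 2 * t * inner (T x) y + t^2 * inner (T y) y"
      by (simp add: blinfun.add_right blinfun.scaleR_right inner_add_left inner_add_right sym
          power2_eq_square algebra_simps)
    finally show ?thesis .
  qed
  show ?thesis
  proof (cases "inner (T y) y = 0")
    case True
    have "inner (T x) y = 0"
    proof (rule ccontr)
      assume ne: "inner (T x) y \<noteq> 0"
      define t where "t = - (inner (T x) x + 1) / (2 * inner (T x) y)"
      have "2 * t * inner (T x) y = - (inner (T x) x + 1)" using ne by (simp add: t_def)
      with quad[of t] True show False by simp
    qed
    then show ?thesis using True by simp
  next
    case False
    then have pos: "inner (T y) y > 0" using ps[of y] by simp
    define t where "t = - inner (T x) y / inner (T y) y"
    have "0 \<le> inner (T x) x + 2 * t * inner (T x) y + t^2 * inner (T y) y" by (rule quad)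
    also have "\<dots> = inner (T x) x - (inner (T x) y)^2 / inner (T y) y"
      using pos by (simp add: t_def field_simps power2_eq_square)
    finally show ?thesis using pos by (simp add: field_simps)
  qed
qed

lemma positive_op_norm_apply_sq_le:
  assumes "positive_op T" and M: "\<And>z. inner (T z) z \<le> M * (norm z)^2"
  shows "(norm (T x))^2 \<le> M * inner (T x) x"
proof -
  have ps: "\<And>a. 0 \<le> inner (T a) a" using assms by (auto simp: positive_op_def)
  have "((norm (T x))^2)^2 \<le> inner (T x) x * inner (T (T x)) (T x)"
    using positive_op_inner_sq_le[OF assms(1), of x "T x"] by (simp add: power2_norm_eq_inner)
  also have "\<dots> \<le> inner (T x) x * (M * (norm (T x))^2)"
    by (rule mult_left_mono[OF M ps])
  finally have h: "((norm (T x))^2)^2 \<le> (M * inner (T x) x) * (norm (T x))^2"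
    by (simp add: algebra_simps)
  show ?thesis
  proof (cases "T x = 0")
    case True
    have "0 \<le> M * inner (T x) x"
    proof (cases "x = 0")
      case False
      have "0 \<le> M * (norm x)^2" using ps[of x] M[of x] by linarith
      then have "0 \<le> M" using False by (simp add: zero_le_mult_iff)
      then show ?thesis using ps[of x] by simp
    qed simp
    then show ?thesis using True by simp
  next
    case False
    then show ?thesis using h by (simp add: power2_eq_square)
  qed
qed

lemma positive_op_norm_le:
  assumes "positive_op T" and M: "\<And>z. inner (T z) z \<le> M * (norm z)^2" and "0 \<le> M"
  shows "norm T \<le> M"
proof (rule norm_blinfun_bound[OF assms(3)])
  fix x
  have "(norm (T x))^2 \<le> M * inner (T x) x" by (rule positive_op_norm_apply_sq_le[OF assms(1) M])
  also have "\<dots> \<le> M * (M * (norm x)^2)" by (rule mult_left_mono[OF M assms(3)])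
  also have "\<dots> = (M * norm x)^2" by (simp add: power2_eq_square)
  finally show "norm (T x) \<le> M * norm x"
    using assms(3) by (meson norm_ge_zero power2_le_imp_le zero_le_mult_iff)
qed

lemma inner_apply_le_norm:
  fixes T :: "'a::real_inner \<Rightarrow>\<^sub>L 'a"
  shows "inner (T z) z \<le> norm T * (norm z)^2"
proof -
  have "inner (T z) z \<le> norm (T z) * norm z" by (rule norm_cauchy_schwarz)
  also have "\<dots> \<le> norm T * norm z * norm z" by (simp add: mult_right_mono norm_blinfun)
  finally show ?thesis by (simp add: power2_eq_square mult.assoc)
qed

lemma positive_op_inner_add_le:
  assumes "positive_op T"
  shows "inner (T (a + b)) (a + b) \<le> 2 * inner (T a) a + 2 * inner (T b) b"
proof -
  have sa: "\<And>a b. inner (T a) b = inner a (T b)" and ps: "\<And>a. 0 \<le> inner (T a) a"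
    using assms by (auto simp: positive_op_def self_adjoint_def)
  have sym: "inner (T b) a = inner (T a) b" by (metis sa inner_commute)
  have "0 \<le> inner (T (a - b)) (a - b)" by (rule ps)
  then show ?thesis
    by (simp add: blinfun.add_right blinfun.diff_right inner_add_left inner_add_right
        inner_diff_left inner_diff_right sym)
qed

lemma positive_op_add:
  assumes "positive_op S" "positive_op T"
  shows "positive_op (S + T)"
  using assms unfolding positive_op_def self_adjoint_def
  by (auto simp: blinfun.add_left inner_add_left inner_add_right intro: add_nonneg_nonneg)

lemma projection_op_imp_positive_op:
  assumes "projection_op P"
  shows "positive_op P"
proof -
  have "inner (P z) z = inner (P z) (P z)" for z
    using assms by (metis inner_commute projection_op_def self_adjoint_def)
  then show ?thesis using assms by (simp add: positive_op_def projection_op_def)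
qed

lemma J_linear_add: "J_linear J S \<Longrightarrow> J_linear J T \<Longrightarrow> J_linear J (S + T)"
  by (simp add: J_linear_def blinfun.add_left blinfun.add_right)

lemma J_linear_diff: "J_linear J S \<Longrightarrow> J_linear J T \<Longrightarrow> J_linear J (S - T)"
  by (simp add: J_linear_def blinfun.diff_left blinfun.diff_right)

section \<open>Projections onto finite orthonormal sets\<close>

definition finite_orthonormal :: "'a::real_inner set \<Rightarrow> bool" where
  "finite_orthonormal E \<longleftrightarrow>
     finite E \<and> (\<forall>e\<in>E. norm e = 1) \<and> (\<forall>e\<in>E. \<forall>f\<in>E. e \<noteq> f \<longrightarrow> inner e f = 0)"

definition orthonormal_proj :: "'a::real_inner set \<Rightarrow> 'a \<Rightarrow>\<^sub>L 'a" where
  "orthonormal_proj E = Blinfun (\<lambda>x. \<Sum>e\<in>E. inner x e *\<^sub>R e)"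

lemma orthonormal_proj_apply: "orthonormal_proj E x = (\<Sum>e\<in>E. inner x e *\<^sub>R e)"
proof -
  have "bounded_linear (\<lambda>x. \<Sum>e\<in>E. inner x e *\<^sub>R e)"
    by (intro bounded_linear_sum bounded_linear_scaleR_const bounded_linear_inner_left)
  then show ?thesis by (simp add: orthonormal_proj_def bounded_linear_Blinfun_apply)
qed

lemma orthonormal_proj_inner_basis:
  assumes "finite_orthonormal E" "e \<in> E"
  shows "inner (orthonormal_proj E x) e = inner x e"
proof -
  have "inner (orthonormal_proj E x) e = (\<Sum>f\<in>E. if f = e then inner x e else 0)"
    unfolding orthonormal_proj_apply inner_sum_left
    using assms by (intro sum.cong) (auto simp: finite_orthonormal_def norm_eq_1)
  also have "\<dots> = inner x e" using assms by (simp add: finite_orthonormal_def)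
  finally show ?thesis .
qed

lemma orthogonal_span:
  assumes "w \<in> span E" "\<And>e. e \<in> E \<Longrightarrow> inner d e = 0"
  shows "inner d w = 0"
proof -
  have "subspace {w. inner d w = 0}"
    by (auto simp: subspace_def inner_add_right)
  then show ?thesis using assms span_induct[of w E "\<lambda>w. inner d w = 0"] by auto
qed

lemma orthonormal_proj_residual_orthogonal:
  assumes "finite_orthonormal E" "w \<in> span E"
  shows "inner (x - orthonormal_proj E x) w = 0"
  by (rule orthogonal_span[OF assms(2)])
    (simp add: inner_diff_left orthonormal_proj_inner_basis[OF assms(1)])

lemma orthonormal_proj_in_span: "orthonormal_proj E x \<in> span E"
  unfolding orthonormal_proj_apply by (intro span_sum span_scale span_base)

lemma orthonormal_proj_unique:
  assumes "finite_orthonormal E" "p \<in> span E" "\<And>e. e \<in> E \<Longrightarrow> inner (x - p) e = 0"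
  shows "p = orthonormal_proj E x"
proof -
  define d where "d = p - orthonormal_proj E x"
  have "d \<in> span E" unfolding d_def by (intro span_diff assms(2) orthonormal_proj_in_span)
  have "inner d e = 0" if "e \<in> E" for e
  proof -
    have "d = (x - orthonormal_proj E x) - (x - p)" by (simp add: d_def)
    then show ?thesis
      using assms(3)[OF that] orthonormal_proj_residual_orthogonal[OF assms(1) span_base[OF that]]
      by (simp add: inner_diff_left)
  qed
  then have "inner d d = 0" using orthogonal_span[OF \<open>d \<in> span E\<close>] by blast
  then show ?thesis by (simp add: d_def)
qed

lemma orthonormal_proj_self_adjoint: "self_adjoint (orthonormal_proj E)"
  by (simp add: self_adjoint_def orthonormal_proj_apply inner_sum_left inner_sum_right
      mult.commute inner_commute)

lemma orthonormal_proj_projection_op: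
  assumes "finite_orthonormal E"
  shows "projection_op (orthonormal_proj E)"
proof -
  have "orthonormal_proj E (orthonormal_proj E x) = orthonormal_proj E x" for x
    by (rule sym, rule orthonormal_proj_unique[OF assms orthonormal_proj_in_span]) simp
  then show ?thesis by (simp add: projection_op_def orthonormal_proj_self_adjoint)
qed

lemma orthonormal_proj_inner_self: "inner (orthonormal_proj E x) x = (\<Sum>e\<in>E. (inner x e)^2)"
  unfolding orthonormal_proj_apply inner_sum_left inner_scaleR_left power2_eq_square
  by (simp add: inner_commute)

lemma span_invariant:
  assumes "linear f" "\<And>z. z \<in> Z \<Longrightarrow> f z \<in> span Z" "w \<in> span Z"
  shows "f w \<in> span Z"
proof -
  have "f ` span Z = span (f ` Z)" using assms(1) by (simp add: span_linear_image)
  also have "\<dots> \<subseteq> span Z" using assms(2) by (simp add: image_subsetI span_minimal)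
  finally show ?thesis using assms(3) by blast
qed

lemma orthonormal_proj_commute:
  assumes "finite_orthonormal E" "bounded_linear f" "\<And>e. e \<in> E \<Longrightarrow> f e \<in> span E"
    and adj: "\<And>a b. \<bar>inner (f a) b\<bar> = \<bar>inner a (f b)\<bar>"
  shows "orthonormal_proj E (f x) = f (orthonormal_proj E x)"
proof (rule sym, rule orthonormal_proj_unique[OF assms(1)])
  have lin: "linear f" using assms(2) bounded_linear.linear by blast
  show "f (orthonormal_proj E x) \<in> span E"
    by (rule span_invariant[OF lin assms(3) orthonormal_proj_in_span])
  fix e assume "e \<in> E"
  have "\<bar>inner (f x - f (orthonormal_proj E x)) e\<bar> = \<bar>inner (x - orthonormal_proj E x) (f e)\<bar>"
    using adj by (simp add: linear_diff[OF lin, symmetric])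
  also have "\<dots> = 0"
    using orthonormal_proj_residual_orthogonal[OF assms(1) assms(3)[OF \<open>e \<in> E\<close>]] by simp
  finally show "inner (f x - f (orthonormal_proj E x)) e = 0" by simp
qed

lemma finite_orthonormal_span_exists:
  fixes Z :: "'a::real_inner set"
  assumes "finite Z"
  shows "\<exists>E. finite_orthonormal E \<and> span E = span Z"
  using assms
proof (induction Z rule: finite_induct)
  case empty
  show ?case by (rule exI[of _ "{}"]) (simp add: finite_orthonormal_def)
next
  case (insert a Z)
  then obtain E where E: "finite_orthonormal E" "span E = span Z" by blast
  have spZ: "span (insert a Z) = span (insert a E)"
    using E(2) by (simp add: span_insert)
  define a' where "a' = a - orthonormal_proj E a"
  have span_a': "span (insert a E) = span (insert a' E)"
    by (rule eq_span_insert_eq) (simp add: a'_def orthonormal_proj_in_span)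
  show ?case
  proof (cases "a' = 0")
    case True
    then have "a \<in> span E" using orthonormal_proj_in_span[of E a] by (simp add: a'_def)
    then show ?thesis using spZ E by (metis span_redundant)
  next
    case False
    define e' where "e' = a' /\<^sub>R norm a'"
    have orth: "inner e' e = 0" if "e \<in> E" for e
      using orthonormal_proj_residual_orthogonal[OF E(1) span_base[OF that], of a]
      by (simp add: e'_def a'_def)
    have "finite_orthonormal (insert e' E)"
      using E(1) False orth by (auto simp: finite_orthonormal_def e'_def inner_commute)
    moreover have "span (insert a' E) = span (insert e' E)"
    proof -
      have "a' = norm a' *\<^sub>R e'" using False by (simp add: e'_def)
      then have "a' \<in> span (insert e' E)" by (metis span_base span_scale insertI1)
      moreover have "e' \<in> span (insert a' E)" unfolding e'_def by (intro span_scale span_base) simp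
      ultimately show ?thesis
        unfolding span_eq by (auto intro: span_base)
    qed
    ultimately show ?thesis using spZ span_a' by metis
  qed
qed

section \<open>Compact operators\<close>

primrec coordinate_box :: "'a::real_normed_vector list \<Rightarrow> real \<Rightarrow> 'a set" where
  "coordinate_box [] M = {0}"
| "coordinate_box (e # L) M = {a + b | a b. a \<in> (\<lambda>t. t *\<^sub>R e) ` {-M..M} \<and> b \<in> coordinate_box L M}"

lemma compact_coordinate_box: "compact (coordinate_box L M)"
proof (induction L)
  case (Cons e L)
  have "compact ((\<lambda>t. t *\<^sub>R e) ` {-M..M})"
    by (intro compact_continuous_image continuous_intros) simp
  then show ?case using Cons by (simp add: compact_sums)
qed simp

lemma sum_list_in_coordinate_box:
  assumes "\<And>e. e \<in> set L \<Longrightarrow> \<bar>c e\<bar> \<le> M"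
  shows "(\<Sum>e\<leftarrow>L. c e *\<^sub>R e) \<in> coordinate_box L M"
  using assms
proof (induction L)
  case (Cons e L)
  have "c e \<in> {-M..M}" using Cons.prems[of e] by auto
  then have "c e *\<^sub>R e \<in> (\<lambda>t. t *\<^sub>R e) ` {-M..M}" by blast
  moreover have "(\<Sum>e\<leftarrow>L. c e *\<^sub>R e) \<in> coordinate_box L M" using Cons by auto
  ultimately show ?case by auto
qed simp

lemma compact_op_if_image_subset_compact:
  assumes "compact C" "blinfun_apply T ` cball 0 1 \<subseteq> C"
  shows "compact_op T"
proof -
  have "closure (T ` cball 0 1) \<subseteq> C"
    by (rule closure_minimal[OF assms(2) compact_imp_closed[OF assms(1)]])
  then have "closure (T ` cball 0 1) = closure (T ` cball 0 1) \<inter> C" by blast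
  then show ?thesis unfolding compact_op_def by (metis closed_Int_compact closed_closure assms(1))
qed

lemma finite_rank_compact_op:
  fixes T :: "'a::real_inner \<Rightarrow>\<^sub>L 'a"
  assumes "finite B" "\<And>x. T x \<in> span B"
  shows "compact_op T"
proof -
  obtain E where E: "finite_orthonormal E" "span E = span B"
    using finite_orthonormal_span_exists[OF assms(1)] by blast
  obtain L where L: "set L = E" "distinct L"
    using E(1) finite_distinct_list finite_orthonormal_def by blast
  show ?thesis
  proof (rule compact_op_if_image_subset_compact[OF compact_coordinate_box], safe)
    fix x :: 'a assume x: "x \<in> cball 0 1"
    have "T x = orthonormal_proj E (T x)"
      using assms(2) E by (intro orthonormal_proj_unique) auto
    also have "\<dots> = (\<Sum>e\<leftarrow>L. inner (T x) e *\<^sub>R e)"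
      using L by (simp add: orthonormal_proj_apply sum_list_distinct_conv_sum_set)
    also have "\<dots> \<in> coordinate_box L (norm T)"
    proof (rule sum_list_in_coordinate_box)
      fix e assume "e \<in> set L"
      then have "norm e = 1" using L E(1) by (auto simp: finite_orthonormal_def)
      have "\<bar>inner (T x) e\<bar> \<le> norm (T x) * norm e" by (rule Cauchy_Schwarz_ineq2)
      also have "\<dots> \<le> norm T * norm x" using \<open>norm e = 1\<close> by (simp add: norm_blinfun)
      also have "\<dots> \<le> norm T" using x by (simp add: mult_left_le)
      finally show "\<bar>inner (T x) e\<bar> \<le> norm T" .
    qed
    finally show "T x \<in> coordinate_box L (norm T)" .
  qed
qed

lemma compact_op_zero: "compact_op (0 :: 'a::real_inner \<Rightarrow>\<^sub>L 'a)"
  by (rule finite_rank_compact_op[of "{}"]) auto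

lemma compact_op_add:
  assumes "compact_op K1" "compact_op K2"
  shows "compact_op (K1 + K2)"
proof (rule compact_op_if_image_subset_compact)
  let ?S1 = "closure (K1 ` cball 0 1)" and ?S2 = "closure (K2 ` cball 0 1)"
  show "compact {a + b | a b. a \<in> ?S1 \<and> b \<in> ?S2}"
    using assms by (intro compact_sums) (auto simp: compact_op_def)
  show "(K1 + K2) ` cball 0 1 \<subseteq> {a + b | a b. a \<in> ?S1 \<and> b \<in> ?S2}"
    by (auto simp: blinfun.add_left intro: closure_subset[THEN subsetD])
qed

section \<open>Scalar structures\<close>

lemma scalar_structure_inner:
  "scalar_structure J \<Longrightarrow> inner (J x) (J y) = inner x y"
  by (auto simp: scalar_structure_def complex_structure_def)

lemma scalar_structure_twice:
  "scalar_structure J \<Longrightarrow> J (J x) = x \<or> J (J x) = - x"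
  by (auto simp: scalar_structure_def complex_structure_def)

lemma scalar_structure_abs_inner:
  assumes "scalar_structure J"
  shows "\<bar>inner (J a) b\<bar> = \<bar>inner a (J b)\<bar>"
  using scalar_structure_inner[OF assms, of a "J b"] scalar_structure_twice[OF assms, of b] by auto

lemma scalar_structure_span_closed:
  assumes "scalar_structure J" "w \<in> Z \<union> J ` Z"
  shows "J w \<in> span (Z \<union> J ` Z)"
proof -
  have "J (J z) \<in> span (Z \<union> J ` Z)" if "z \<in> Z" for z
    using scalar_structure_twice[OF assms(1), of z] that
    by (metis UnI1 span_base span_neg)
  then show ?thesis using assms(2) by (auto intro: span_base)
qed

lemma complex_structure_inner_self: "complex_structure J \<Longrightarrow> inner u (J u) = 0"
  unfolding complex_structure_def by (metis inner_commute neg_equal_zero inner_minus_right)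

lemma orthonormal_proj_J_linear:
  assumes "scalar_structure J" "finite_orthonormal E" "\<And>e. e \<in> E \<Longrightarrow> J e \<in> span E"
  shows "J_linear J (orthonormal_proj E)"
  unfolding J_linear_def
  using orthonormal_proj_commute[OF assms(2) blinfun.bounded_linear_right assms(3)]
    scalar_structure_abs_inner[OF assms(1)] by blast

lemma J_linear_id: "J_linear J id_blinfun"
  by (simp add: J_linear_def)

lemma J_linear_comp: "J_linear J S \<Longrightarrow> J_linear J T \<Longrightarrow> J_linear J (S o\<^sub>L T)"
  by (simp add: J_linear_def)

section \<open>Distance to the compact operators\<close>

definition far_from_compacts ::
  "('a::real_normed_vector \<Rightarrow>\<^sub>L 'a) \<Rightarrow> real \<Rightarrow> ('a \<Rightarrow>\<^sub>L 'a) \<Rightarrow> bool" where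
  "far_from_compacts J c R \<longleftrightarrow> (\<forall>K. compact_op K \<and> J_linear J K \<longrightarrow> c \<le> norm (R - K))"

lemma far_from_compacts_ess_norm: "far_from_compacts J (ess_norm J A) A"
  unfolding far_from_compacts_def ess_norm_def
  by (auto intro!: cInf_lower bdd_belowI[of _ 0])

lemma far_from_compacts_diff:
  fixes R P :: "'a::real_inner \<Rightarrow>\<^sub>L 'a"
  assumes "far_from_compacts J c R" "compact_op P" "J_linear J P"
  shows "far_from_compacts J c (R - P)"
  unfolding far_from_compacts_def
proof safe
  fix K :: "'a \<Rightarrow>\<^sub>L 'a" assume "compact_op K" "J_linear J K"
  then have "c \<le> norm (R - (P + K))"
    using assms compact_op_add J_linear_add unfolding far_from_compacts_def by blast
  then show "c \<le> norm (R - P - K)" by (simp add: algebra_simps)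
qed

lemma positive_op_compression:
  assumes "positive_op R" "self_adjoint Q"
  shows "positive_op (Q o\<^sub>L R o\<^sub>L Q)"
proof -
  have Qsa: "inner (Q x) y = inner x (Q y)" for x y
    using assms(2) by (simp add: self_adjoint_def)
  have Rsa: "inner (R x) y = inner x (R y)" for x y
    using assms(1) by (simp add: positive_op_def self_adjoint_def)
  have "inner (Q (R (Q x))) y = inner x (Q (R (Q y)))" for x y
    by (simp add: Qsa Rsa)
  moreover have "0 \<le> inner (Q (R (Q x))) x" for x
    using assms(1) by (simp add: Qsa[of "R (Q x)"] positive_op_def)
  ultimately show ?thesis by (simp add: positive_op_def self_adjoint_def)
qed

lemma norm_diff_orthonormal_proj_le:
  assumes "finite_orthonormal E"
  shows "norm (x - orthonormal_proj E x) \<le> norm x"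
proof -
  let ?p = "orthonormal_proj E x"
  have "inner (x - ?p) ?p = 0"
    by (rule orthonormal_proj_residual_orthogonal[OF assms orthonormal_proj_in_span])
  then have "(norm x)^2 = (norm (x - ?p))^2 + (norm ?p)^2"
    using norm_add_Pythagorean[of "x - ?p" ?p] by (simp add: orthogonal_def)
  then have "(norm (x - ?p))^2 \<le> (norm x)^2" by simp
  then show ?thesis by (rule power2_le_imp_le) simp
qed

lemma compact_op_diff_compression:
  fixes R :: "'a::real_inner \<Rightarrow>\<^sub>L 'a"
  assumes "finite_orthonormal E"
  defines "Q \<equiv> id_blinfun - orthonormal_proj E"
  shows "compact_op (R - (Q o\<^sub>L R o\<^sub>L Q))"
proof (rule finite_rank_compact_op[of "E \<union> R ` E"])
  show "finite (E \<union> R ` E)" using assms by (simp add: finite_orthonormal_def)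
  let ?P = "orthonormal_proj E"
  fix x
  have PE: "?P y \<in> span (E \<union> R ` E)" for y
    using orthonormal_proj_in_span span_mono[of E "E \<union> R ` E"] by blast
  have "R (?P x) \<in> R ` span E" by (rule imageI[OF orthonormal_proj_in_span])
  also have "\<dots> = span (R ` E)"
    by (simp add: span_linear_image bounded_linear.linear[OF blinfun.bounded_linear_right])
  also have "\<dots> \<subseteq> span (E \<union> R ` E)" by (rule span_mono) blast
  finally have RPE: "R (?P x) \<in> span (E \<union> R ` E)" .
  have "(R - (Q o\<^sub>L R o\<^sub>L Q)) x = ?P (R x) + R (?P x) - ?P (R (?P x))"
    by (simp add: Q_def blinfun.diff_left blinfun.diff_right)
  then show "(R - (Q o\<^sub>L R o\<^sub>L Q)) x \<in> span (E \<union> R ` E)"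
    by (simp add: PE RPE span_add span_diff)
qed

text \<open>If the quadratic form of R stayed below c' on the orthogonal complement of span Z,
  then compressing R to that complement would be a compact perturbation of R of norm at most c'.\<close>

lemma exists_orthogonal_unit_vector_large_quad:
  fixes R J :: "'a::real_inner \<Rightarrow>\<^sub>L 'a"
  assumes J: "scalar_structure J" and Rpos: "positive_op R" and RJ: "J_linear J R"
    and far: "far_from_compacts J c R" and c': "c' < c" "0 \<le> c'"
    and Z: "finite Z" "\<And>z. z \<in> Z \<Longrightarrow> J z \<in> span Z"
  shows "\<exists>y. norm y = 1 \<and> (\<forall>z\<in>Z. inner y z = 0) \<and> c' \<le> inner (R y) y"
proof (rule ccontr)
  assume "\<not> ?thesis"
  then have small: "inner (R y) y < c'" if "norm y = 1" "\<forall>z\<in>Z. inner y z = 0" for y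
    using that by (meson not_le)
  obtain E where E: "finite_orthonormal E" "span E = span Z"
    using finite_orthonormal_span_exists[OF Z(1)] by blast
  define P where "P = orthonormal_proj E"
  define Q where "Q = id_blinfun - P"
  have PJ: "J_linear J P"
  proof (unfold P_def, rule orthonormal_proj_J_linear[OF J E(1)])
    fix e assume "e \<in> E"
    then show "J e \<in> span E"
      using span_invariant[OF bounded_linear.linear[OF blinfun.bounded_linear_right] Z(2)]
        span_base[of e E] E(2) by simp
  qed
  have "compact_op (R - (Q o\<^sub>L R o\<^sub>L Q))"
    unfolding Q_def P_def by (rule compact_op_diff_compression[OF E(1)])
  moreover have "J_linear J (R - (Q o\<^sub>L R o\<^sub>L Q))"
    unfolding Q_def by (intro J_linear_diff J_linear_comp RJ J_linear_id PJ)
  ultimately have "c \<le> norm (R - (R - (Q o\<^sub>L R o\<^sub>L Q)))"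
    using far unfolding far_from_compacts_def by blast
  then have "c \<le> norm (Q o\<^sub>L R o\<^sub>L Q)" by simp
  have "positive_op (Q o\<^sub>L R o\<^sub>L Q)"
    using positive_op_compression[OF Rpos] orthonormal_proj_self_adjoint[of E]
    by (simp add: Q_def P_def self_adjoint_def blinfun.diff_left inner_diff_left inner_diff_right)
  moreover have "inner ((Q o\<^sub>L R o\<^sub>L Q) x) x \<le> c' * (norm x)^2" for x
  proof -
    have quad: "inner (Q (R (Q x))) x = inner (R (Q x)) (Q x)"
      using orthonormal_proj_self_adjoint[of E]
      by (simp add: Q_def P_def self_adjoint_def blinfun.diff_left inner_diff_left inner_diff_right)
    have "inner (R (Q x)) (Q x) \<le> c' * (norm (Q x))^2"
    proof (cases "Q x = 0")
      case False
      have "\<forall>z\<in>Z. inner (Q x) z = 0"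
        using orthonormal_proj_residual_orthogonal[OF E(1)] E(2)
        by (simp add: Q_def P_def blinfun.diff_left span_base)
      then have "inner (R (Q x /\<^sub>R norm (Q x))) (Q x /\<^sub>R norm (Q x)) < c'"
        using False by (intro small) auto
      then show ?thesis
        using False by (simp add: blinfun.scaleR_right power2_eq_square field_simps)
    qed (simp add: c'(2))
    also have "\<dots> \<le> c' * (norm x)^2"
      using norm_diff_orthonormal_proj_le[OF E(1), of x] c'(2)
      by (intro mult_left_mono power_mono) (auto simp: Q_def P_def blinfun.diff_left)
    finally show ?thesis by (simp add: quad)
  qed
  ultimately have "norm (Q o\<^sub>L R o\<^sub>L Q) \<le> c'" using c'(2) by (rule positive_op_norm_le)
  with \<open>c \<le> norm (Q o\<^sub>L R o\<^sub>L Q)\<close> c'(1) show False by simp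
qed

section \<open>Finite-rank projections below a positive operator\<close>

definition compact_projection_below ::
  "('a::real_inner \<Rightarrow>\<^sub>L 'a) \<Rightarrow> ('a \<Rightarrow>\<^sub>L 'a) \<Rightarrow> ('a \<Rightarrow>\<^sub>L 'a) \<Rightarrow> bool" where
  "compact_projection_below J R P \<longleftrightarrow>
     projection_op P \<and> J_linear J P \<and> compact_op P \<and> positive_op (R - P)"

lemma positive_op_test_vector_bound:
  assumes "positive_op R" "inner (R z) w = s" "inner (R w) w \<le> C * s" "0 \<le> C"
  shows "s \<le> C * inner (R z) z"
proof (cases "s \<le> 0")
  case True
  moreover have "0 \<le> C * inner (R z) z" using assms by (simp add: positive_op_def)
  ultimately show ?thesis by linarith
next
  case False
  have "s * s \<le> inner (R z) z * inner (R w) w"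
    using positive_op_inner_sq_le[OF assms(1), of z w] assms(2) by (simp add: power2_eq_square)
  also have "\<dots> \<le> inner (R z) z * (C * s)"
    using assms(1,3) by (intro mult_left_mono) (auto simp: positive_op_def)
  finally show ?thesis using False by (simp add: algebra_simps)
qed

lemma inner_range_sq_le:
  assumes Rpos: "positive_op R" and vcond: "inner (R v) v \<le> (norm (R v))^2"
  shows "(inner z (R v))^2 \<le> (norm (R v))^2 * inner (R z) z"
proof -
  define a where "a = inner z (R v)"
  have "a^2 \<le> (norm (R v))^2 * inner (R z) z"
  proof (rule positive_op_test_vector_bound[OF Rpos, where w = "a *\<^sub>R v"])
    show "inner (R z) (a *\<^sub>R v) = a^2"
      using Rpos by (simp add: a_def positive_op_def self_adjoint_def power2_eq_square)
    have "inner (R v) v * a^2 \<le> (norm (R v))^2 * a^2" using vcond by (simp add: mult_right_mono)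
    then show "inner (R (a *\<^sub>R v)) (a *\<^sub>R v) \<le> (norm (R v))^2 * a^2"
      by (simp add: blinfun.scaleR_right power2_eq_square algebra_simps)
  qed simp
  then show ?thesis by (simp add: a_def)
qed

lemma inner_range_pair_sq_le:
  assumes J: "complex_structure J" and Rpos: "positive_op R" and RJ: "J_linear J R"
    and vcond: "inner (R v) v \<le> (norm (R v))^2"
  shows "(inner z (R v))^2 + (inner z (R (J v)))^2 \<le> (norm (R v))^2 * inner (R z) z"
proof -
  have Rsa: "inner (R a) b = inner a (R b)" for a b
    using Rpos by (simp add: positive_op_def self_adjoint_def)
  have RJ': "R (J a) = J (R a)" for a using RJ by (simp add: J_linear_def)
  have iso: "inner (J a) (J b) = inner a b" for a b
    using J by (simp add: complex_structure_def)
  have "inner (R v) (J v) = inner (J (R v)) (J (J v))" by (simp add: iso)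
  also have "\<dots> = - inner (R v) (J v)"
    using J by (simp add: complex_structure_def RJ'[symmetric]) (metis Rsa inner_commute)
  finally have RvJv: "inner (R v) (J v) = 0" by simp
  define a where "a = inner z (R v)"
  define b where "b = inner z (R (J v))"
  define w where "w = a *\<^sub>R v + b *\<^sub>R J v"
  have "a^2 + b^2 \<le> (norm (R v))^2 * inner (R z) z"
  proof (rule positive_op_test_vector_bound[OF Rpos, where w = w])
    show "inner (R z) w = a^2 + b^2"
      by (simp add: w_def a_def b_def Rsa inner_add_right power2_eq_square)
    have "inner (R w) w = (a^2 + b^2) * inner (R v) v"
      using RvJv Rsa[of "J v" v] iso[of "R v" v]
      by (simp add: w_def blinfun.add_right blinfun.scaleR_right inner_add_left
          inner_add_right RJ' inner_commute power2_eq_square algebra_simps)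
    also have "\<dots> \<le> (norm (R v))^2 * (a^2 + b^2)"
      using mult_right_mono[OF vcond, of "a^2 + b^2"] by (simp add: mult.commute)
    finally show "inner (R w) w \<le> (norm (R v))^2 * (a^2 + b^2)" .
  qed simp
  then show ?thesis by (simp add: a_def b_def)
qed

lemma sum_sq_inner_range_le:
  fixes R J :: "'a::real_inner \<Rightarrow>\<^sub>L 'a"
  assumes J: "scalar_structure J" and Rpos: "positive_op R" and RJ: "J_linear J R"
    and Rv: "R v \<noteq> 0" and vcond: "inner (R v) v \<le> (norm (R v))^2"
  defines "u \<equiv> R v /\<^sub>R norm (R v)"
  shows "(\<Sum>e\<in>{u, J u}. (inner z e)^2) \<le> inner (R z) z"
proof -
  have N: "0 < (norm (R v))^2" using Rv by simp
  have Ju: "J u = R (J v) /\<^sub>R norm (R v)"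
    using RJ by (simp add: u_def J_linear_def blinfun.scaleR_right)
  consider "J = id_blinfun" | "complex_structure J" using J by (auto simp: scalar_structure_def)
  then show ?thesis
  proof cases
    case 1
    have "(\<Sum>e\<in>{u, J u}. (inner z e)^2) = (inner z (R v))^2 / (norm (R v))^2"
      by (simp add: 1 u_def power_mult_distrib power_inverse divide_inverse mult.commute)
    then show ?thesis
      using inner_range_sq_le[OF Rpos vcond, of z] N by (simp add: divide_le_eq mult.commute)
  next
    case 2
    have "J u \<noteq> u"
      using complex_structure_inner_self[OF 2, of u] Rv by (auto simp: u_def)
    then have "(\<Sum>e\<in>{u, J u}. (inner z e)^2) = (inner z u)^2 + (inner z (J u))^2" by simp
    also have "\<dots> = ((inner z (R v))^2 + (inner z (R (J v)))^2) / (norm (R v))^2"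
      unfolding Ju by (simp add: u_def power_mult_distrib power_inverse divide_inverse algebra_simps)
    finally show ?thesis
      using inner_range_pair_sq_le[OF 2 Rpos RJ vcond, of z] N
      by (simp add: divide_le_eq mult.commute)
  qed
qed

lemma range_projection_below:
  fixes R J :: "'a::real_inner \<Rightarrow>\<^sub>L 'a"
  assumes J: "scalar_structure J" and Rpos: "positive_op R" and RJ: "J_linear J R"
    and Rv: "R v \<noteq> 0" and vcond: "inner (R v) v \<le> (norm (R v))^2"
  shows "\<exists>P. compact_projection_below J R P \<and> (inner x (R v))^2 \<le> (norm (R v))^2 * inner (P x) x"
proof -
  define u where "u = R v /\<^sub>R norm (R v)"
  define E where "E = {u, J u}"
  define P where "P = orthonormal_proj E"
  have nu: "norm u = 1" using Rv by (simp add: u_def)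
  have onE: "finite_orthonormal E"
  proof -
    have "inner u (J u) = 0" if "J u \<noteq> u"
      using that J complex_structure_inner_self by (auto simp: scalar_structure_def)
    then show ?thesis
      using nu scalar_structure_inner[OF J, of u u]
      by (auto simp: finite_orthonormal_def E_def norm_eq_sqrt_inner inner_commute)
  qed
  have JE: "J e \<in> span E" if "e \<in> E" for e
    using scalar_structure_span_closed[OF J, of e "{u}"] that by (simp add: E_def insert_commute)
  have "projection_op P" unfolding P_def by (rule orthonormal_proj_projection_op[OF onE])
  moreover have "J_linear J P" unfolding P_def by (rule orthonormal_proj_J_linear[OF J onE JE])
  moreover have "compact_op P"
    using onE orthonormal_proj_in_span
    by (intro finite_rank_compact_op[of E]) (auto simp: P_def finite_orthonormal_def)
  moreover have "positive_op (R - P)"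
    using Rpos orthonormal_proj_self_adjoint[of E]
      sum_sq_inner_range_le[OF J Rpos RJ Rv vcond, folded u_def E_def]
    by (simp add: positive_op_def self_adjoint_def P_def blinfun.diff_left inner_diff_left
        inner_diff_right orthonormal_proj_inner_self)
  moreover have "(inner x (R v))^2 \<le> (norm (R v))^2 * inner (P x) x"
  proof -
    have "(inner x (R v))^2 = (norm (R v))^2 * (inner x u)^2"
      using Rv by (simp add: u_def power_mult_distrib power_inverse)
    also have "\<dots> \<le> (norm (R v))^2 * (\<Sum>e\<in>E. (inner x e)^2)"
      by (intro mult_left_mono member_le_sum) (auto simp: E_def)
    finally show ?thesis by (simp add: P_def orthonormal_proj_inner_self)
  qed
  ultimately show ?thesis by (auto simp: compact_projection_below_def)
qed

lemma norm_apply_add_orthogonal_sq: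
  fixes R :: "'a::real_inner \<Rightarrow>\<^sub>L 'a"
  assumes "inner (R y) (R x) = 0"
  shows "(norm (R (x + t *\<^sub>R y)))^2 = (norm (R x))^2 + t^2 * (norm (R y))^2"
  using assms unfolding blinfun.add_right blinfun.scaleR_right power2_norm_eq_inner
  by (simp add: inner_add_left inner_add_right inner_commute power2_eq_square)

text \<open>The cross terms vanish, and the excess of norm (R y)^2 over inner (R y) y, which is at
  least inner (R y) y - 1, pays for inner (R x) x.\<close>

lemma inner_apply_le_norm_sq_perturbation:
  assumes Rpos: "positive_op R"
    and y: "norm y = 1" "inner (R y) x = 0" "inner (R y) (R x) = 0"
    and eta: "0 \<le> \<eta>" and large: "1 + \<eta> \<le> inner (R y) y"
    and t: "inner (R x) x \<le> t^2 * \<eta>"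
  shows "inner (R (x + t *\<^sub>R y)) (x + t *\<^sub>R y) \<le> (norm (R (x + t *\<^sub>R y)))^2"
proof -
  define r where "r = inner (R y) y"
  have "r^2 \<le> (norm (R y))^2"
    using Cauchy_Schwarz_ineq2[of "R y" y] y(1) by (simp add: r_def abs_le_square_iff[symmetric])
  moreover have "1 * (r - 1) \<le> r * (r - 1)"
    using large eta by (intro mult_right_mono) (auto simp: r_def)
  ultimately have "\<eta> \<le> (norm (R y))^2 - r"
    using large by (simp add: r_def power2_eq_square algebra_simps)
  then have "inner (R x) x \<le> t^2 * ((norm (R y))^2 - r)"
    using t by (meson mult_left_mono order_trans zero_le_power2)
  moreover have "inner (R (x + t *\<^sub>R y)) (x + t *\<^sub>R y) = inner (R x) x + t^2 * r"
    using y(2) Rpos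
    by (simp add: r_def blinfun.add_right blinfun.scaleR_right inner_add_left inner_add_right
        positive_op_def self_adjoint_def inner_commute power2_eq_square)
  ultimately show ?thesis
    using norm_apply_add_orthogonal_sq[OF y(3), of t] zero_le_power2[of "norm (R x)"]
    unfolding right_diff_distrib by linarith
qed

lemma exists_test_vector:
  fixes R J :: "'a::real_inner \<Rightarrow>\<^sub>L 'a"
  assumes J: "scalar_structure J" and Rpos: "positive_op R" and RJ: "J_linear J R"
    and far: "far_from_compacts J c R" and c: "1 < c"
    and M: "\<And>z. norm (R z) \<le> M * norm z" and q: "0 < inner (R x) x"
  shows "\<exists>v. inner x (R v) = inner (R x) x \<and> inner (R v) v \<le> (norm (R v))^2 \<and>
             (norm (R v))^2 \<le> M^2 * ((norm x)^2 + 2 * inner (R x) x / (c - 1))"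
proof -
  define \<eta> where "\<eta> = (c - 1) / 2"
  have eta: "0 < \<eta>" using c by (simp add: \<eta>_def)
  define Z0 where "Z0 = {R x, R (R x)}"
  have "\<exists>y. norm y = 1 \<and> (\<forall>z\<in>Z0 \<union> J ` Z0. inner y z = 0) \<and> 1 + \<eta> \<le> inner (R y) y"
  proof (rule exists_orthogonal_unit_vector_large_quad[OF J Rpos RJ far])
    show "1 + \<eta> < c" "0 \<le> 1 + \<eta>" using c by (simp_all add: \<eta>_def field_simps)
    show "finite (Z0 \<union> J ` Z0)" by (simp add: Z0_def)
    show "J z \<in> span (Z0 \<union> J ` Z0)" if "z \<in> Z0 \<union> J ` Z0" for z
      using scalar_structure_span_closed[OF J that] .
  qed
  then obtain y where y: "norm y = 1" "\<forall>z\<in>Z0 \<union> J ` Z0. inner y z = 0" "1 + \<eta> \<le> inner (R y) y"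
    by blast
  have Rsa: "inner (R a) b = inner a (R b)" for a b
    using Rpos by (simp add: positive_op_def self_adjoint_def)
  have yRx: "inner (R y) x = 0" and RyRx: "inner (R y) (R x) = 0"
    using y(2) Rsa[of y x] Rsa[of y "R x"] by (auto simp: Z0_def inner_commute)
  define t where "t = sqrt (inner (R x) x / \<eta>)"
  have t2: "t^2 = inner (R x) x / \<eta>" using q eta by (simp add: t_def)
  define v where "v = x + t *\<^sub>R y"
  have "inner x (R v) = inner (R x) x"
    using yRx by (simp add: v_def blinfun.add_right blinfun.scaleR_right inner_add_right inner_commute)
  moreover have "inner (R v) v \<le> (norm (R v))^2"
    unfolding v_def using t2 eta
    by (intro inner_apply_le_norm_sq_perturbation[OF Rpos y(1) yRx RyRx _ y(3)]) simp_all
  moreover have "(norm (R v))^2 \<le> M^2 * ((norm x)^2 + 2 * inner (R x) x / (c - 1))"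
  proof -
    have "(norm (R v))^2 = (norm (R x))^2 + t^2 * (norm (R y))^2"
      unfolding v_def by (rule norm_apply_add_orthogonal_sq[OF RyRx])
    also have "\<dots> \<le> (M * norm x)^2 + t^2 * M^2"
      using M[of x] M[of y] y(1) by (intro add_mono mult_left_mono power_mono) auto
    finally show ?thesis using t2 by (simp add: \<eta>_def power_mult_distrib algebra_simps)
  qed
  ultimately show ?thesis by blast
qed

lemma exists_compact_projection_capturing:
  fixes R J :: "'a::real_inner \<Rightarrow>\<^sub>L 'a"
  assumes J: "scalar_structure J" and Rpos: "positive_op R" and RJ: "J_linear J R"
    and far: "far_from_compacts J c R" and c: "1 < c"
    and M: "\<And>z. norm (R z) \<le> M * norm z" and q: "0 < inner (R x) x"
  shows "\<exists>P. compact_projection_below J R P \<and>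
    (inner (R x) x)^2 \<le> inner (P x) x * (M^2 * ((norm x)^2 + 2 * inner (R x) x / (c - 1)))"
proof -
  obtain v where v: "inner x (R v) = inner (R x) x" "inner (R v) v \<le> (norm (R v))^2"
    and bound: "(norm (R v))^2 \<le> M^2 * ((norm x)^2 + 2 * inner (R x) x / (c - 1))"
    using exists_test_vector[OF assms] by blast
  have "R v \<noteq> 0" using v(1) q by auto
  then obtain P where P: "compact_projection_below J R P"
    and capture: "(inner x (R v))^2 \<le> (norm (R v))^2 * inner (P x) x"
    using range_projection_below[OF J Rpos RJ _ v(2)] by blast
  have "0 \<le> inner (P x) x"
    using P projection_op_imp_positive_op
    by (auto simp: compact_projection_below_def positive_op_def)
  then have "(norm (R v))^2 * inner (P x) x
      \<le> inner (P x) x * (M^2 * ((norm x)^2 + 2 * inner (R x) x / (c - 1)))"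
    using bound by (simp add: mult.commute mult_left_mono)
  then show ?thesis using P capture v(1) by auto
qed

lemma compact_projection_below_zero:
  "positive_op R \<Longrightarrow> compact_projection_below J R (0 :: 'a::real_inner \<Rightarrow>\<^sub>L 'a)"
  by (simp add: compact_projection_below_def projection_op_def self_adjoint_def J_linear_def
      compact_op_zero)

lemma compact_projection_below_inner_le:
  "compact_projection_below J R P \<Longrightarrow> inner (P x) x \<le> inner (R x) x"
  by (simp add: compact_projection_below_def positive_op_def blinfun.diff_left inner_diff_left)

section \<open>The greedy iteration\<close>

text \<open>The supremum of inner (P x) x over the projections allowed by compact_projection_below
  need not be attained, so the greedy step only asks for half of it.\<close>

definition greedy_projection ::
  "('a::real_inner \<Rightarrow>\<^sub>L 'a) \<Rightarrow> ('a \<Rightarrow>\<^sub>L 'a) \<Rightarrow> 'a \<Rightarrow> ('a \<Rightarrow>\<^sub>L 'a)" where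
  "greedy_projection J R x = (SOME P. compact_projection_below J R P \<and>
     (\<forall>P'. compact_projection_below J R P' \<longrightarrow> inner (P' x) x \<le> 2 * inner (P x) x))"

lemma greedy_projection_spec:
  assumes "positive_op R"
  shows "compact_projection_below J R (greedy_projection J R x) \<and>
    (\<forall>P'. compact_projection_below J R P' \<longrightarrow> inner (P' x) x \<le> 2 * inner (greedy_projection J R x x) x)"
  unfolding greedy_projection_def
proof (rule someI_ex)
  define S where "S = {inner (blinfun_apply P' x) x | P'. compact_projection_below J R P'}"
  have "S \<noteq> {}" using compact_projection_below_zero[OF assms] by (auto simp: S_def)
  have "bdd_above S"
    unfolding S_def using compact_projection_below_inner_le by (fast intro: bdd_aboveI)
  have le_Sup: "inner (P' x) x \<le> Sup S" if "compact_projection_below J R P'" for P'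
    using that \<open>bdd_above S\<close> by (intro cSup_upper) (auto simp: S_def)
  show "\<exists>P. compact_projection_below J R P \<and>
    (\<forall>P'. compact_projection_below J R P' \<longrightarrow> inner (P' x) x \<le> 2 * inner (P x) x)"
  proof (cases "Sup S \<le> 0")
    case True
    then show ?thesis
      using compact_projection_below_zero[OF assms] le_Sup by (intro exI[of _ 0]) force
  next
    case False
    then obtain s where "s \<in> S" "Sup S / 2 < s"
      using less_cSupE[OF _ \<open>S \<noteq> {}\<close>, of "Sup S / 2"] by auto
    then show ?thesis using le_Sup unfolding S_def by force
  qed
qed

lemma decseq_tendsto_zero_if_frequent_drops:
  fixes q :: "nat \<Rightarrow> real"
  assumes dec: "decseq q" and nonneg: "\<And>n. 0 \<le> q n"
    and drops: "\<And>\<epsilon>. 0 < \<epsilon> \<Longrightarrow>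
      \<exists>\<delta>>0. \<exists>\<^sub>F n in sequentially. \<epsilon> \<le> q n \<longrightarrow> q (Suc n) \<le> q n - \<delta>"
  shows "q \<longlonglongrightarrow> 0"
proof (rule LIMSEQ_I)
  fix \<epsilon> :: real assume "0 < \<epsilon>"
  have "\<exists>n. q n < \<epsilon>"
  proof (rule ccontr)
    assume "\<not> ?thesis"
    then have above: "\<epsilon> \<le> q n" for n by (simp add: not_less)
    obtain \<delta> where "0 < \<delta>" and freq: "\<exists>\<^sub>F n in sequentially. q (Suc n) \<le> q n - \<delta>"
      using drops[OF \<open>0 < \<epsilon>\<close>] above by auto
    have "\<exists>n. q n \<le> q 0 - real k * \<delta>" for k
    proof (induction k)
      case (Suc k)
      then obtain n where n: "q n \<le> q 0 - real k * \<delta>" by blast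
      then obtain m where "n \<le> m" "q (Suc m) \<le> q m - \<delta>"
        using freq unfolding frequently_sequentially by blast
      then have "q (Suc m) \<le> q 0 - real (Suc k) * \<delta>"
        using n decseqD[OF dec \<open>n \<le> m\<close>] by (simp add: algebra_simps)
      then show ?case by blast
    qed auto
    moreover obtain k :: nat where "q 0 / \<delta> < real k" using reals_Archimedean2 by blast
    then have "q 0 < real k * \<delta>" using \<open>0 < \<delta>\<close> by (simp add: pos_divide_less_eq)
    ultimately obtain n where "q n < 0" by (meson diff_less_0_iff_less le_less_trans)
    then show False using nonneg[of n] by simp
  qed
  then obtain N where "q N < \<epsilon>" by blast
  then show "\<exists>N. \<forall>n\<ge>N. norm (q n - 0) < \<epsilon>"
    using decseqD[OF dec] nonneg by (metis abs_of_nonneg diff_zero le_less_trans real_norm_def)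
qed

lemma quadratic_form_tendsto_zero_dense:
  fixes S :: "nat \<Rightarrow> 'a::real_inner \<Rightarrow>\<^sub>L 'a"
  assumes pos: "\<And>n. positive_op (S n)" and M: "\<And>n z. inner (S n z) z \<le> M * (norm z)^2"
    and dense: "closure D = UNIV" and lim: "\<And>y. y \<in> D \<Longrightarrow> (\<lambda>n. inner (S n y) y) \<longlonglongrightarrow> 0"
  shows "(\<lambda>n. inner (S n x) x) \<longlonglongrightarrow> 0"
proof (rule LIMSEQ_I)
  fix e :: real assume e: "0 < e"
  define M' where "M' = \<bar>M\<bar> + 1"
  have M': "0 < M'" by (simp add: M'_def add_nonneg_pos)
  have "x \<in> closure D" "0 < sqrt (e / (4 * M'))" using dense e M' by auto
  then obtain y where "y \<in> D" and y: "dist y x < sqrt (e / (4 * M'))"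
    using closure_approachable by blast
  define w where "w = x - y"
  have "(norm w)^2 < (sqrt (e / (4 * M')))^2"
    using y by (intro power_strict_mono) (auto simp: w_def dist_norm norm_minus_commute)
  then have "(norm w)^2 < e / (4 * M')" using e M' by simp
  have "M * (norm w)^2 \<le> M' * (norm w)^2" by (intro mult_right_mono) (auto simp: M'_def)
  also have "\<dots> \<le> M' * (e / (4 * M'))"
    using \<open>(norm w)^2 < e / (4 * M')\<close> M' by (intro mult_left_mono) auto
  finally have w: "M * (norm w)^2 \<le> e / 4" using M' by simp
  have "0 < e / 4" using e by simp
  then obtain N where "\<forall>n\<ge>N. dist (inner (S n y) y) 0 < e / 4"
    using lim[OF \<open>y \<in> D\<close>] unfolding lim_sequentially by blast
  then have N: "inner (S n y) y < e / 4" if "N \<le> n" for n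
    using that by (auto simp: dist_real_def)
  show "\<exists>N. \<forall>n\<ge>N. norm (inner (S n x) x - 0) < e"
  proof (intro exI allI impI)
    fix n assume "N \<le> n"
    have "inner (S n x) x \<le> 2 * inner (S n y) y + 2 * inner (S n w) w"
      using positive_op_inner_add_le[OF pos[of n], of y w] by (simp add: w_def)
    also have "\<dots> < e" using N[OF \<open>N \<le> n\<close>] M[of n w] w by linarith
    finally show "norm (inner (S n x) x - 0) < e"
      using pos[of n] by (simp add: positive_op_def)
  qed
qed

lemma tendsto_zero_if_quadratic_form_tendsto_zero:
  fixes S :: "nat \<Rightarrow> 'a::real_inner \<Rightarrow>\<^sub>L 'a"
  assumes pos: "\<And>n. positive_op (S n)" and M: "\<And>n z. inner (S n z) z \<le> M * (norm z)^2"
    and lim: "(\<lambda>n. inner (S n x) x) \<longlonglongrightarrow> 0"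
  shows "(\<lambda>n. S n x) \<longlonglongrightarrow> 0"
proof (rule Lim_null_comparison)
  show "\<forall>\<^sub>F n in sequentially. norm (S n x) \<le> sqrt (M * inner (S n x) x)"
    by (intro always_eventually allI real_le_rsqrt positive_op_norm_apply_sq_le[OF pos M])
  have "(\<lambda>n. sqrt (M * inner (S n x) x)) \<longlonglongrightarrow> sqrt (M * 0)"
    by (intro tendsto_real_sqrt tendsto_mult tendsto_const lim)
  then show "(\<lambda>n. sqrt (M * inner (S n x) x)) \<longlonglongrightarrow> 0" by simp
qed

locale greedy_decomposition =
  fixes J A :: "'a::real_inner \<Rightarrow>\<^sub>L 'a" and c :: real and target :: "nat \<Rightarrow> 'a"
  assumes J: "scalar_structure J" and AJ: "J_linear J A" and Apos: "positive_op A"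
    and c: "1 < c" and far: "far_from_compacts J c A"
begin

primrec remainder :: "nat \<Rightarrow> 'a \<Rightarrow>\<^sub>L 'a" where
  "remainder 0 = A"
| "remainder (Suc n) = remainder n - greedy_projection J (remainder n) (target n)"

definition piece :: "nat \<Rightarrow> 'a \<Rightarrow>\<^sub>L 'a" where
  "piece n = greedy_projection J (remainder n) (target n)"

lemma remainder_Suc: "remainder (Suc n) = remainder n - piece n"
  by (simp add: piece_def)

declare remainder.simps(2) [simp del]

lemma remainder_invariant:
  "positive_op (remainder n) \<and> J_linear J (remainder n) \<and> positive_op (A - remainder n) \<and>
   far_from_compacts J c (remainder n)"
proof (induction n)
  case 0
  then show ?case
    using Apos AJ far by (simp add: positive_op_def[of 0] self_adjoint_def)
next
  case (Suc n)
  have "compact_projection_below J (remainder n) (piece n)"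
    using greedy_projection_spec Suc.IH unfolding piece_def by blast
  then have "projection_op (piece n)" "J_linear J (piece n)" "compact_op (piece n)"
      "positive_op (remainder n - piece n)"
    by (auto simp: compact_projection_below_def)
  moreover have "positive_op (A - (remainder n - piece n))"
  proof -
    have "positive_op ((A - remainder n) + piece n)"
      using Suc.IH \<open>projection_op (piece n)\<close> positive_op_add projection_op_imp_positive_op
      by blast
    then show ?thesis by (simp add: algebra_simps)
  qed
  ultimately show ?case
    using Suc.IH by (simp add: remainder_Suc J_linear_diff far_from_compacts_diff)
qed

lemma positive_op_remainder: "positive_op (remainder n)"
  using remainder_invariant by blast

lemma piece_below: "compact_projection_below J (remainder n) (piece n)"
  using greedy_projection_spec[OF positive_op_remainder] by (simp add: piece_def)

lemma remainder_inner_le: "inner (remainder n z) z \<le> norm A * (norm z)^2"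
proof -
  have "0 \<le> inner ((A - remainder n) z) z"
    using remainder_invariant by (simp add: positive_op_def)
  then have "inner (remainder n z) z \<le> inner (A z) z" by (simp add: blinfun.diff_left inner_diff_left)
  also have "\<dots> \<le> norm A * (norm z)^2" by (rule inner_apply_le_norm)
  finally show ?thesis .
qed

lemma remainder_inner_decseq: "decseq (\<lambda>n. inner (remainder n z) z)"
proof (rule decseq_SucI)
  fix n
  have "0 \<le> inner (piece n z) z"
    using piece_below projection_op_imp_positive_op
    by (auto simp: compact_projection_below_def positive_op_def)
  then show "inner (remainder (Suc n) z) z \<le> inner (remainder n z) z"
    by (simp add: remainder_Suc blinfun.diff_left inner_diff_left)
qed

lemma sum_piece: "(\<Sum>i<n. piece i x) = A x - remainder n x"
  by (induction n) (simp_all add: remainder_Suc blinfun.diff_left)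

text \<open>The bound of exists_compact_projection_capturing is uniform in n because
  inner (remainder n x) x \<le> inner (A x) x and norm (remainder n) \<le> norm A.\<close>

lemma remainder_inner_drop:
  assumes "0 < \<epsilon>"
  shows "\<exists>\<delta>>0. \<forall>n. target n = x \<longrightarrow> \<epsilon> \<le> inner (remainder n x) x \<longrightarrow>
           inner (remainder (Suc n) x) x \<le> inner (remainder n x) x - \<delta>"
proof (intro exI conjI allI impI)
  define D where "D = 1 + (norm A)^2 * ((norm x)^2 + 2 * inner (A x) x / (c - 1))"
  have "0 \<le> inner (A x) x" using Apos by (simp add: positive_op_def)
  then have D: "0 < D" using c by (simp add: D_def add_pos_nonneg)
  show "0 < \<epsilon>^2 / (2 * D)" using assms D by simp
  fix n assume tn: "target n = x" and large: "\<epsilon> \<le> inner (remainder n x) x"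
  let ?R = "remainder n"
  have M: "norm (?R z) \<le> norm A * norm z" for z
    using positive_op_norm_le[OF positive_op_remainder remainder_inner_le]
    by (meson norm_blinfun norm_ge_zero mult_right_mono order_trans)
  obtain P where P: "compact_projection_below J ?R P"
    and capture: "(inner (?R x) x)^2 \<le> inner (P x) x * ((norm A)^2 * ((norm x)^2 + 2 * inner (?R x) x / (c - 1)))"
    using exists_compact_projection_capturing[OF J positive_op_remainder _ _ c M, of x] remainder_invariant
      large assms by auto
  have "inner (?R x) x \<le> inner (A x) x"
    using remainder_invariant[of n] by (simp add: positive_op_def blinfun.diff_left inner_diff_left)
  then have "2 * inner (?R x) x / (c - 1) \<le> 2 * inner (A x) x / (c - 1)"
    using c by (intro divide_right_mono) auto
  then have "(norm A)^2 * ((norm x)^2 + 2 * inner (?R x) x / (c - 1)) \<le> D"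
    unfolding D_def by (smt (verit) mult_left_mono zero_le_power2)
  moreover have "0 \<le> inner (P x) x"
    using P projection_op_imp_positive_op by (auto simp: compact_projection_below_def positive_op_def)
  ultimately have "(inner (?R x) x)^2 \<le> inner (P x) x * D"
    using capture by (meson mult_left_mono order_trans)
  moreover have "\<epsilon>^2 \<le> (inner (?R x) x)^2" using large assms by (simp add: power_mono)
  ultimately have "\<epsilon>^2 / D \<le> inner (P x) x" using D by (simp add: divide_le_eq)
  also have "\<dots> \<le> 2 * inner (piece n x) x"
    using greedy_projection_spec[OF positive_op_remainder] P by (simp add: piece_def tn)
  finally show "inner (remainder (Suc n) x) x \<le> inner (remainder n x) x - \<epsilon>^2 / (2 * D)"
    by (simp add: remainder_Suc blinfun.diff_left inner_diff_left field_simps)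
qed

lemma remainder_inner_tendsto_zero:
  assumes "\<exists>\<^sub>F n in sequentially. target n = x"
  shows "(\<lambda>n. inner (remainder n x) x) \<longlonglongrightarrow> 0"
proof (rule decseq_tendsto_zero_if_frequent_drops[OF remainder_inner_decseq])
  show "0 \<le> inner (remainder n x) x" for n
    using positive_op_remainder by (simp add: positive_op_def)
  fix \<epsilon> :: real assume "0 < \<epsilon>"
  then obtain \<delta> where "0 < \<delta>" and drop: "\<forall>n. target n = x \<longrightarrow> \<epsilon> \<le> inner (remainder n x) x \<longrightarrow>
      inner (remainder (Suc n) x) x \<le> inner (remainder n x) x - \<delta>"
    using remainder_inner_drop by blast
  have "\<exists>\<^sub>F n in sequentially. \<epsilon> \<le> inner (remainder n x) x \<longrightarrow>
      inner (remainder (Suc n) x) x \<le> inner (remainder n x) x - \<delta>"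
    using assms by (rule frequently_elim1) (use drop in blast)
  then show "\<exists>\<delta>>0. \<exists>\<^sub>F n in sequentially. \<epsilon> \<le> inner (remainder n x) x \<longrightarrow>
      inner (remainder (Suc n) x) x \<le> inner (remainder n x) x - \<delta>"
    using \<open>0 < \<delta>\<close> by blast
qed

lemma has_projection_decomposition:
  assumes "closure D = UNIV" and "\<And>y. y \<in> D \<Longrightarrow> \<exists>\<^sub>F n in sequentially. target n = y"
  shows "has_projection_decomposition J A"
  unfolding has_projection_decomposition_def
proof (intro exI conjI ballI allI)
  fix i assume "i \<in> (UNIV :: nat set)"
  show "projection_op (piece i)" "J_linear J (piece i)"
    using piece_below by (auto simp: compact_projection_below_def)
next
  fix x
  have "(\<lambda>n. inner (remainder n x) x) \<longlonglongrightarrow> 0"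
    by (rule quadratic_form_tendsto_zero_dense[OF positive_op_remainder remainder_inner_le assms(1)])
      (rule remainder_inner_tendsto_zero[OF assms(2)])
  then have "(\<lambda>n. remainder n x) \<longlonglongrightarrow> 0"
    by (rule tendsto_zero_if_quadratic_form_tendsto_zero[OF positive_op_remainder remainder_inner_le])
  then have "(\<lambda>n. A x - remainder n x) \<longlonglongrightarrow> A x - 0" by (intro tendsto_diff tendsto_const)
  then show "(\<lambda>n. \<Sum>i\<in>UNIV \<inter> {..<n}. piece i x) \<longlonglongrightarrow> A x" by (simp add: sum_piece)
qed

end

lemma frequently_fst_prod_decode: "\<exists>\<^sub>F n in sequentially. fst (prod_decode n) = j"
  unfolding frequently_sequentially
proof
  fix N
  show "\<exists>n\<ge>N. fst (prod_decode n) = j"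
    by (rule exI[of _ "prod_encode (j, N)"]) (simp add: le_prod_encode_2)
qed

theorem theorem2:
  fixes J A :: "'a::{real_inner, complete_space} \<Rightarrow>\<^sub>L 'a"
  assumes "scalar_structure J"
    and "infinite_dimensional TYPE('a)"
    and "separable_space (euclidean :: 'a topology)"
    and "J_linear J A"
    and "positive_op A"
    and "ess_norm J A > 1"
  shows "has_projection_decomposition J A"
proof -
  obtain C :: "'a set" where C: "countable C" "closure C = UNIV"
    using assms(3) unfolding separable_space_def by auto
  define target where "target n = from_nat_into C (fst (prod_decode n))" for n
  interpret greedy_decomposition J A "ess_norm J A" target
    using assms by unfold_locales (simp_all add: far_from_compacts_ess_norm)
  show ?thesis
  proof (rule has_projection_decomposition[OF C(2)])
    fix y assume "y \<in> C"
    then obtain j where j: "from_nat_into C j = y" using from_nat_into_surj[OF C(1)] by metis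
    show "\<exists>\<^sub>F n in sequentially. target n = y"
      using frequently_fst_prod_decode[of j] by (rule frequently_elim1) (simp add: target_def j)
  qed
qed

end
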